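(* Let $\mathbf{L}$ be a Euclidean modal logic and let $\mathcal{F}^{\rho}_{A,B}$ be a galaxy in $\mathcal{L}_2$. If $\mathbf{N}^{+}\times\{2\}\subseteq\mathtt{S}_{\mathbf{L}}$, then $\mathbf{L}$ is valid in $\mathcal{F}^{\rho}_{A,B}$.
   Context: A frame is a pair $(W,R)$ with $W$ non-empty and $R\subseteq W\times W$. Modal formulas (propositional variables, $\bot,\neg,\vee,\Box$) have standard Kripke semantics; validity means truth at all points under all valuations. A (normal) modal logic contains all tautologies and K axioms and is closed under uniform substitution, modus ponens and necessitation; a Euclidean modal logic is one not containing $\bot$ and containing $\Diamond\psi\to\Box\Diamond\psi$ for all $\psi$. For sets $A,B$ with $A\cap B=\emptyset$, $A\cup B\ne\emptyset$ and $\rho:A\to\wp(B)$, the galaxy $\mathcal{F}^{\rho}_{A,B}$ has universe $A\cup B$ and relation $\bigcup_{s\in A}(\{s\}\times\rho(s))\cup(B\times B)$. $\mathcal{L}_2$ is the class of galaxies with $|A|\ge4$, $|B|\ge4$ and $|B\setminus\rho(s)|=2$ for all $s\in A$. $\mathbf{N}^{+}=\{1,2,\dots\}$, $\mathbf{N}^{-}=\{-1,0,1,\dots\}$. For $m\in\mathbf{N}^{+}$, $n\ge0$, the flower $\mathcal{F}_m^n$ has universe $\{0,\dots,m+n\}$ and relation $(\{0\}\times\{1,\dots,m\})\cup\{1,\dots,m+n\}^2$; $\mathcal{F}_m^{-1}$ has universe $\{1,\dots,m\}$ and relation $\{1,\dots,m\}^2$. $\mathtt{S}_{\mathbf{L}}=\{(m,n)\in\mathbf{N}^{+}\times\mathbf{N}^{-}:\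 \mathbf{L}\text{ valid in }\mathcal{F}_m^n\}$. *)

theory Defs
  imports Main
begin

datatype fm = Var nat | Bot | Neg fm | Disj fm fm | Box fm

definition Imp :: "fm \<Rightarrow> fm \<Rightarrow> fm" where
  "Imp a b = Disj (Neg a) b"

definition Dia :: "fm \<Rightarrow> fm" where
  "Dia a = Neg (Box (Neg a))"

fun sat :: "'a set \<Rightarrow> ('a \<times> 'a) set \<Rightarrow> (nat \<Rightarrow> 'a set) \<Rightarrow> 'a \<Rightarrow> fm \<Rightarrow> bool" where
  "sat W R V w (Var p) = (w \<in> V p)"
| "sat W R V w Bot = False"
| "sat W R V w (Neg a) = (\<not> sat W R V w a)"
| "sat W R V w (Disj a b) = (sat W R V w a \<or> sat W R V w b)"
| "sat W R V w (Box a) = (\<forall>v\<in>W. (w, v) \<in> R \<longrightarrow> sat W R V v a)"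

definition valid_fm :: "'a set \<Rightarrow> ('a \<times> 'a) set \<Rightarrow> fm \<Rightarrow> bool" where
  "valid_fm W R a = (\<forall>V. \<forall>w\<in>W. sat W R V w a)"

definition valid_logic :: "fm set \<Rightarrow> 'a set \<Rightarrow> ('a \<times> 'a) set \<Rightarrow> bool" where
  "valid_logic L W R = (\<forall>a\<in>L. valid_fm W R a)"

fun peval :: "(fm \<Rightarrow> bool) \<Rightarrow> fm \<Rightarrow> bool" where
  "peval f (Var p) = f (Var p)"
| "peval f Bot = False"
| "peval f (Neg a) = (\<not> peval f a)"
| "peval f (Disj a b) = (peval f a \<or> peval f b)"
| "peval f (Box a) = f (Box a)"

definition tautology :: "fm \<Rightarrow> bool" where
  "tautology a = (\<forall>f. peval f a)"

fun subst :: "(nat \<Rightarrow> fm) \<Rightarrow> fm \<Rightarrow> fm" where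
  "subst s (Var p) = s p"
| "subst s Bot = Bot"
| "subst s (Neg a) = Neg (subst s a)"
| "subst s (Disj a b) = Disj (subst s a) (subst s b)"
| "subst s (Box a) = Box (subst s a)"

definition normal_logic :: "fm set \<Rightarrow> bool" where
  "normal_logic L =
    ((\<forall>a. tautology a \<longrightarrow> a \<in> L) \<and>
     (\<forall>a b. Imp (Box (Imp a b)) (Imp (Box a) (Box b)) \<in> L) \<and>
     (\<forall>s a. a \<in> L \<longrightarrow> subst s a \<in> L) \<and>
     (\<forall>a b. a \<in> L \<longrightarrow> Imp a b \<in> L \<longrightarrow> b \<in> L) \<and>
     (\<forall>a. a \<in> L \<longrightarrow> Box a \<in> L))"

definition euclidean_logic :: "fm set \<Rightarrow> bool" where
  "euclidean_logic L =
    (normal_logic L \<and> Bot \<notin> L \<and> (\<forall>a. Imp (Dia a) (Box (Dia a)) \<in> L))"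

definition galaxy_univ :: "'a set \<Rightarrow> 'a set \<Rightarrow> 'a set" where
  "galaxy_univ A B = A \<union> B"

definition galaxy_rel :: "'a set \<Rightarrow> 'a set \<Rightarrow> ('a \<Rightarrow> 'a set) \<Rightarrow> ('a \<times> 'a) set" where
  "galaxy_rel A B \<rho> = (\<Union>s\<in>A. {s} \<times> \<rho> s) \<union> (B \<times> B)"

definition is_galaxy :: "'a set \<Rightarrow> 'a set \<Rightarrow> ('a \<Rightarrow> 'a set) \<Rightarrow> bool" where
  "is_galaxy A B \<rho> = (A \<inter> B = {} \<and> A \<union> B \<noteq> {} \<and> (\<forall>s\<in>A. \<rho> s \<subseteq> B))"

text \<open>A set has at least n elements (works also for infinite sets).\<close>
definition at_least :: "nat \<Rightarrow> 'a set \<Rightarrow> bool" where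
  "at_least n X = (\<exists>F\<subseteq>X. finite F \<and> card F = n)"

definition in_L2 :: "'a set \<Rightarrow> 'a set \<Rightarrow> ('a \<Rightarrow> 'a set) \<Rightarrow> bool" where
  "in_L2 A B \<rho> = (is_galaxy A B \<rho> \<and> at_least 4 A \<and> at_least 4 B \<and>
                   (\<forall>s\<in>A. card (B - \<rho> s) = 2))"

definition flower_univ :: "nat \<Rightarrow> int \<Rightarrow> nat set" where
  "flower_univ m n = (if n = -1 then {1..m} else {0..m + nat n})"

definition flower_rel :: "nat \<Rightarrow> int \<Rightarrow> (nat \<times> nat) set" where
  "flower_rel m n = (if n = -1 then {1..m} \<times> {1..m}
                     else ({0} \<times> {1..m}) \<union> ({1..m + nat n} \<times> {1..m + nat n}))"

definition S_L :: "fm set \<Rightarrow> (nat \<times> int) set" where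
  "S_L L = {(m, n). m \<ge> 1 \<and> n \<ge> -1 \<and> valid_logic L (flower_univ m n) (flower_rel m n)}"

end

theory Submission
  imports Defs
begin

text \<open>
  From a point s \<in> A one reaches exactly s, \<rho>(s) \<subseteq> B and B, and every point of B sees
  exactly B.  Given a formula a and a valuation, identify the points of \<rho>(s) that agree on
  the variables of a; if there are m \<ge> 1 classes, sending s to the root 0, the classes to
  the petals 1, \<dots>, m and the two points of B - \<rho>(s) to m + 1 and m + 2 is a bounded morphism
  onto the flower F_m^2 that respects the valuation.  Hence a, being valid in F_m^2, is true at
  s and at every point of B.
\<close>

fun fvars :: "fm \<Rightarrow> nat set" where
  "fvars (Var p) = {p}"
| "fvars Bot = {}"
| "fvars (Neg a) = fvars a"
| "fvars (Disj a b) = fvars a \<union> fvars b"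
| "fvars (Box a) = fvars a"

lemma finite_fvars: "finite (fvars a)"
  by (induction a) auto

definition bounded_morphism_on ::
    "'a set \<Rightarrow> 'a set \<Rightarrow> ('a \<times> 'a) set \<Rightarrow> 'b set \<Rightarrow> ('b \<times> 'b) set \<Rightarrow> ('a \<Rightarrow> 'b) \<Rightarrow> bool" where
  "bounded_morphism_on D W R W' R' f \<longleftrightarrow>
     D \<subseteq> W \<and> f ` D \<subseteq> W' \<and>
     (\<forall>x\<in>D. \<forall>y\<in>W. (x, y) \<in> R \<longrightarrow> y \<in> D \<and> (f x, f y) \<in> R') \<and>
     (\<forall>x\<in>D. \<forall>z\<in>W'. (f x, z) \<in> R' \<longrightarrow> (\<exists>y\<in>D. (x, y) \<in> R \<and> f y = z))"

lemma sat_bounded_morphism: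
  assumes f: "bounded_morphism_on D W R W' R' f"
    and val: "\<And>x p. x \<in> D \<Longrightarrow> p \<in> fvars a \<Longrightarrow> x \<in> V p \<longleftrightarrow> f x \<in> V' p"
    and "x \<in> D"
  shows "sat W R V x a \<longleftrightarrow> sat W' R' V' (f x) a"
  using val \<open>x \<in> D\<close>
proof (induction a arbitrary: x)
  case (Box a)
  have forth: "\<And>y. y \<in> W \<Longrightarrow> (x, y) \<in> R \<Longrightarrow> y \<in> D \<and> (f x, f y) \<in> R'"
    and lift: "\<And>z. z \<in> W' \<Longrightarrow> (f x, z) \<in> R' \<Longrightarrow> \<exists>y\<in>D. (x, y) \<in> R \<and> f y = z"
    and "D \<subseteq> W" "f ` D \<subseteq> W'"
    using f \<open>x \<in> D\<close> unfolding bounded_morphism_on_def by blast+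
  have IH: "\<And>y. y \<in> D \<Longrightarrow> sat W R V y a \<longleftrightarrow> sat W' R' V' (f y) a"
    using Box by simp
  show ?case
  proof
    assume "sat W R V x (Box a)"
    then show "sat W' R' V' (f x) (Box a)"
      using lift IH \<open>D \<subseteq> W\<close> by fastforce
  next
    assume "sat W' R' V' (f x) (Box a)"
    then show "sat W R V x (Box a)"
      using forth IH \<open>f ` D \<subseteq> W'\<close> by fastforce
  qed
qed auto

text \<open>The valuation of the image is the image of the valuation; this is correct as long as
  no fibre of f separates two points by a variable of a.\<close>
lemma sat_if_valid_in_morphic_image:
  assumes f: "bounded_morphism_on D W R W' R' f"
    and fibres: "\<And>x y p. x \<in> D \<Longrightarrow> y \<in> D \<Longrightarrow> f x = f y \<Longrightarrow> p \<in> fvars a \<Longrightarrow>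
                   x \<in> V p \<longleftrightarrow> y \<in> V p"
    and "valid_fm W' R' a" and "x \<in> D"
  shows "sat W R V x a"
proof -
  define V' where "V' p = f ` (D \<inter> V p)" for p
  have "x \<in> V p \<longleftrightarrow> f x \<in> V' p" if "x \<in> D" "p \<in> fvars a" for x p
    using fibres[of x _ p] that unfolding V'_def by blast
  then have "sat W R V x a \<longleftrightarrow> sat W' R' V' (f x) a"
    using sat_bounded_morphism[OF f] \<open>x \<in> D\<close> by blast
  moreover have "f x \<in> W'"
    using f \<open>x \<in> D\<close> unfolding bounded_morphism_on_def by blast
  ultimately show ?thesis
    using \<open>valid_fm W' R' a\<close> unfolding valid_fm_def by blast
qed

lemma finite_image_enumeration:
  assumes "finite (\<tau> ` X)"
  obtains g :: "'a \<Rightarrow> nat"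
  where "g ` X = {1..card (\<tau> ` X)}" and "\<And>x y. x \<in> X \<Longrightarrow> y \<in> X \<Longrightarrow> g x = g y \<Longrightarrow> \<tau> x = \<tau> y"
proof -
  obtain e where e: "bij_betw e (\<tau> ` X) {0..<card (\<tau> ` X)}"
    using ex_bij_betw_finite_nat[OF assms] by blast
  show thesis
  proof
    have "(\<lambda>x. e (\<tau> x) + 1) ` X = Suc ` e ` \<tau> ` X"
      by (simp add: image_image)
    also have "\<dots> = {1..card (\<tau> ` X)}"
      using e by (simp add: bij_betw_def image_Suc_atLeastLessThan atLeastLessThanSuc_atLeastAtMost)
    finally show "(\<lambda>x. e (\<tau> x) + 1) ` X = {1..card (\<tau> ` X)}" .
  next
    show "\<tau> x = \<tau> y" if "x \<in> X" "y \<in> X" "e (\<tau> x) + 1 = e (\<tau> y) + 1" for x y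
      using e that by (auto simp: bij_betw_def dest: inj_onD)
  qed
qed

lemma galaxy_rel_iff:
  "(x, y) \<in> galaxy_rel A B \<rho> \<longleftrightarrow> (x \<in> A \<and> y \<in> \<rho> x) \<or> (x \<in> B \<and> y \<in> B)"
  unfolding galaxy_rel_def by auto

locale galaxy_collapse =
  fixes A B :: "'a set" and \<rho> :: "'a \<Rightarrow> 'a set" and s b\<^sub>1 b\<^sub>2 :: 'a
    and g :: "'a \<Rightarrow> nat" and m :: nat
  assumes galaxy: "is_galaxy A B \<rho>"
    and root: "s \<in> A"
    and outside: "B - \<rho> s = {b\<^sub>1, b\<^sub>2}" "b\<^sub>1 \<noteq> b\<^sub>2"
    and petals: "g ` \<rho> s = {1..m}"
begin

definition collapse :: "'a \<Rightarrow> nat" where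
  "collapse x = (if x = s then 0 else if x = b\<^sub>1 then m + 1 else if x = b\<^sub>2 then m + 2 else g x)"

lemma root_notin_B: "s \<notin> B" and succs_root: "\<rho> s \<subseteq> B"
  using galaxy root unfolding is_galaxy_def by auto

lemma collapse_root [simp]: "collapse s = 0"
  by (simp add: collapse_def)

lemma collapse_outside: "collapse b\<^sub>1 = m + 1" "collapse b\<^sub>2 = m + 2"
  using outside root_notin_B by (auto simp: collapse_def)

lemma notin_petals: "s \<notin> \<rho> s" "b\<^sub>1 \<notin> \<rho> s" "b\<^sub>2 \<notin> \<rho> s"
  using outside root_notin_B succs_root by auto

lemma collapse_petal: "x \<in> \<rho> s \<Longrightarrow> collapse x = g x"
  using notin_petals by (auto simp: collapse_def)

lemma collapse_onto_petals: "collapse ` \<rho> s = {1..m}"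
  using collapse_petal petals by simp

lemma collapse_petal_range: "x \<in> \<rho> s \<Longrightarrow> collapse x \<in> {1..m}"
  using collapse_onto_petals by blast

lemma insert_root_B_cases:
  assumes "x \<in> insert s B"
  obtains "x = s" | "x = b\<^sub>1" | "x = b\<^sub>2" | "x \<in> \<rho> s"
  using assms outside by blast

lemma collapse_B:
  assumes "x \<in> B"
  shows "collapse x \<in> {1..m + 2}"
proof -
  from assms have "x \<in> insert s B" by simp
  then show ?thesis
    using assms root_notin_B collapse_outside
    by (cases rule: insert_root_B_cases) (auto dest: collapse_petal_range)
qed

lemma bounded_morphism_collapse:
  "bounded_morphism_on (insert s B) (galaxy_univ A B) (galaxy_rel A B \<rho>)
     (flower_univ m 2) (flower_rel m 2) collapse"
  unfolding bounded_morphism_on_def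
proof (intro conjI)
  show "insert s B \<subseteq> galaxy_univ A B"
    using root unfolding galaxy_univ_def by blast
  show "collapse ` insert s B \<subseteq> flower_univ m 2"
    using collapse_B by (fastforce simp: flower_univ_def)
  show "\<forall>x\<in>insert s B. \<forall>y\<in>galaxy_univ A B. (x, y) \<in> galaxy_rel A B \<rho> \<longrightarrow>
          y \<in> insert s B \<and> (collapse x, collapse y) \<in> flower_rel m 2"
  proof (intro ballI impI)
    fix x y assume "x \<in> insert s B" and "(x, y) \<in> galaxy_rel A B \<rho>"
    then have "x = s \<and> y \<in> \<rho> s \<or> x \<in> B \<and> y \<in> B"
      using galaxy root_notin_B unfolding galaxy_rel_iff is_galaxy_def by blast
    then show "y \<in> insert s B \<and> (collapse x, collapse y) \<in> flower_rel m 2"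
    proof
      assume "x = s \<and> y \<in> \<rho> s"
      then show ?thesis
        using collapse_petal_range succs_root by (auto simp: flower_rel_def)
    next
      assume "x \<in> B \<and> y \<in> B"
      then show ?thesis
        using collapse_B[of x] collapse_B[of y] by (simp add: flower_rel_def)
    qed
  qed
  show "\<forall>x\<in>insert s B. \<forall>z\<in>flower_univ m 2. (collapse x, z) \<in> flower_rel m 2 \<longrightarrow>
          (\<exists>y\<in>insert s B. (x, y) \<in> galaxy_rel A B \<rho> \<and> collapse y = z)"
  proof (intro ballI impI)
    fix x z assume "x \<in> insert s B" and xz: "(collapse x, z) \<in> flower_rel m 2"
    show "\<exists>y\<in>insert s B. (x, y) \<in> galaxy_rel A B \<rho> \<and> collapse y = z"
    proof (cases "x = s")
      case True
      then have "z \<in> collapse ` \<rho> s"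
        using xz collapse_onto_petals by (simp add: flower_rel_def)
      then show ?thesis
        using True root succs_root by (auto simp: galaxy_rel_iff)
    next
      case False
      with \<open>x \<in> insert s B\<close> have "x \<in> B" by simp
      then have "z \<in> collapse ` \<rho> s \<or> z = collapse b\<^sub>1 \<or> z = collapse b\<^sub>2"
        using xz collapse_B[of x] collapse_onto_petals collapse_outside
        by (auto simp: flower_rel_def)
      then have "\<exists>y\<in>B. collapse y = z"
        using succs_root outside by blast
      then show ?thesis
        using \<open>x \<in> B\<close> by (auto simp: galaxy_rel_iff)
    qed
  qed
qed

lemma collapse_in_petals_iff:
  assumes "x \<in> insert s B"
  shows "collapse x \<in> {1..m} \<longleftrightarrow> x \<in> \<rho> s"
  using assms collapse_outside collapse_petal_range notin_petals
  by (cases rule: insert_root_B_cases) auto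

lemma collapse_fibres:
  assumes "x \<in> insert s B" "y \<in> insert s B" "collapse x = collapse y"
  shows "x = y \<or> x \<in> \<rho> s \<and> y \<in> \<rho> s \<and> g x = g y"
proof (cases "x \<in> \<rho> s \<or> y \<in> \<rho> s")
  case True
  then have "x \<in> \<rho> s" "y \<in> \<rho> s"
    using assms collapse_in_petals_iff by metis+
  then show ?thesis
    using assms(3) collapse_petal by simp
next
  case False
  then have "x \<in> {s, b\<^sub>1, b\<^sub>2}" "y \<in> {s, b\<^sub>1, b\<^sub>2}"
    using assms(1,2) outside by auto
  moreover have "s \<noteq> b\<^sub>1" "s \<noteq> b\<^sub>2"
    using outside root_notin_B by auto
  ultimately show ?thesis
    using assms(3) collapse_outside by auto
qed

end

lemma sat_galaxy_if_valid_in_flowers: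
  assumes L2: "in_L2 A B \<rho>" and "s \<in> A"
    and flowers: "\<And>m. m \<ge> 1 \<Longrightarrow> valid_fm (flower_univ m 2) (flower_rel m 2) a"
    and "w \<in> insert s B"
  shows "sat (galaxy_univ A B) (galaxy_rel A B \<rho>) V w a"
proof -
  have galaxy: "is_galaxy A B \<rho>" and "card (B - \<rho> s) = 2" and "at_least 4 B"
    using L2 \<open>s \<in> A\<close> unfolding in_L2_def by auto
  then obtain b\<^sub>1 b\<^sub>2 where outside: "B - \<rho> s = {b\<^sub>1, b\<^sub>2}" "b\<^sub>1 \<noteq> b\<^sub>2"
    by (meson card_2_iff)
  have "\<rho> s \<noteq> {}"
  proof
    assume "\<rho> s = {}"
    obtain F where "F \<subseteq> B" "finite F" "card F = 4"
      using \<open>at_least 4 B\<close> unfolding at_least_def by blast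
    with \<open>\<rho> s = {}\<close> outside have "card F \<le> card {b\<^sub>1, b\<^sub>2}"
      by (intro card_mono) auto
    with \<open>card F = 4\<close> \<open>b\<^sub>1 \<noteq> b\<^sub>2\<close> show False
      by simp
  qed
  define \<tau> where "\<tau> x = {p \<in> fvars a. x \<in> V p}" for x
  have "finite (\<tau> ` \<rho> s)"
    by (rule finite_subset[of _ "Pow (fvars a)"]) (auto simp: \<tau>_def finite_fvars)
  then obtain g where petals: "g ` \<rho> s = {1..card (\<tau> ` \<rho> s)}"
    and g_kernel: "\<And>x y. x \<in> \<rho> s \<Longrightarrow> y \<in> \<rho> s \<Longrightarrow> g x = g y \<Longrightarrow> \<tau> x = \<tau> y"
    by (rule finite_image_enumeration) blast
  define m where "m = card (\<tau> ` \<rho> s)"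
  interpret galaxy_collapse A B \<rho> s b\<^sub>1 b\<^sub>2 g m
    using galaxy \<open>s \<in> A\<close> outside petals[folded m_def] by unfold_locales
  have "{1..m} \<noteq> {}"
    using petals[folded m_def] \<open>\<rho> s \<noteq> {}\<close> by auto
  then have "m \<ge> 1"
    by simp
  show ?thesis
  proof (rule sat_if_valid_in_morphic_image[OF bounded_morphism_collapse _ flowers[OF \<open>m \<ge> 1\<close>]])
    fix x y p assume "x \<in> insert s B" "y \<in> insert s B" "collapse x = collapse y" "p \<in> fvars a"
    then have "\<tau> x = \<tau> y"
      using collapse_fibres g_kernel by metis
    with \<open>p \<in> fvars a\<close> show "x \<in> V p \<longleftrightarrow> y \<in> V p"
      unfolding \<tau>_def by blast
  qed fact+
qed

theorem lemma37:
  fixes L :: "fm set" and A B :: "'a set" and \<rho> :: "'a \<Rightarrow> 'a set"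
  assumes "euclidean_logic L"
    and "in_L2 A B \<rho>"
    and "{m. m \<ge> 1} \<times> {2} \<subseteq> S_L L"
  shows "valid_logic L (galaxy_univ A B) (galaxy_rel A B \<rho>)"
  unfolding valid_logic_def valid_fm_def
proof (intro ballI allI)
  fix a V w assume "a \<in> L" and w: "w \<in> galaxy_univ A B"
  have flowers: "valid_fm (flower_univ m 2) (flower_rel m 2) a" if "m \<ge> 1" for m
  proof -
    have "(m, 2) \<in> S_L L"
      using assms(3) that by blast
    then show ?thesis
      using \<open>a \<in> L\<close> unfolding S_L_def valid_logic_def by simp
  qed
  obtain s where "s \<in> A" "w \<in> insert s B"
  proof -
    obtain s\<^sub>0 where "s\<^sub>0 \<in> A"
      using assms(2) unfolding in_L2_def at_least_def by fastforce
    then show thesis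
      using that w unfolding galaxy_univ_def by blast
  qed
  then show "sat (galaxy_univ A B) (galaxy_rel A B \<rho>) V w a"
    using sat_galaxy_if_valid_in_flowers[OF assms(2) _ flowers] by blast
qed

end
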